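(* Let $n\ge 5$ and $x\in S_n$. Then $x\in\mathrm{Sort}_n(123,321)$ if and only if $\mathrm{inc}_{n+1}(x)\in\mathrm{Sort}_{n+1}(123,321)$.
   Context: For $x=x_1\cdots x_n\in S_n$, $\mathrm{inc}_{n+1}(x)=(x_1+1)(x_2+1)\cdots(x_n+1)\,1\in S_{n+1}$ (insert $1$ at the end and increase all other entries by one). A permutation contains a pattern $p$ if it has a subsequence order-isomorphic to $p$; otherwise it avoids $p$. For a set $T$ of patterns, the map $s_T$ is defined as follows: the entries of the input permutation are read from left to right, with an initially empty stack. At each step, if the input is nonempty and pushing the next input entry onto the stack produces a stack whose contents, read from top to bottom, avoid every pattern in $T$, that entry is pushed; otherwise the top entry of the stack is popped and appended to the output. When the input is exhausted, the remaining stack entries are popped one at a time to the output. Write $s_{\sigma,\tau}=s_{\{\sigma,\tau\}}$ and $s=s_{\{21\}}$ (West's stack-sorting map). $\mathrm{Sort}_n(\sigma,\tau)$ is the set of $x\in S_n$ with $s(s_{\sigma,\tau}(x))=12\cdots n$. *)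

theory Defs
  imports Main "HOL-Library.Sublist"
begin

definition perms :: "nat \<Rightarrow> nat list set" where
  "perms n = {x. distinct x \<and> set x = {1..n}}"

definition order_iso :: "nat list \<Rightarrow> nat list \<Rightarrow> bool" where
  "order_iso ys p \<longleftrightarrow> length ys = length p \<and>
     (\<forall>i<length p. \<forall>j<length p. (ys ! i < ys ! j \<longleftrightarrow> p ! i < p ! j))"

definition contains :: "nat list \<Rightarrow> nat list \<Rightarrow> bool" where
  "contains w p \<longleftrightarrow> (\<exists>ys. subseq ys w \<and> order_iso ys p)"

definition avoids_all :: "nat list set \<Rightarrow> nat list \<Rightarrow> bool" where
  "avoids_all T w \<longleftrightarrow> (\<forall>p\<in>T. \<not> contains w p)"

text \<open>The stack is a list whose head is the top,
  so the list itself is the stack contents read from top to bottom.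
  (The case of an empty stack with a forbidden push never arises when T has only
  patterns of length at least 2; we push in that case to keep the map total.)\<close>

function stack_run :: "nat list set \<Rightarrow> nat list \<Rightarrow> nat list \<Rightarrow> nat list" where
  "stack_run T [] st = st"
| "stack_run T (a # inp) st =
     (if avoids_all T (a # st) \<or> st = [] then stack_run T inp (a # st)
      else hd st # stack_run T (a # inp) (tl st))"
  by pat_completeness auto
termination
  by (relation "measure (\<lambda>(T, inp, st). 2 * length inp + length st)") auto

definition s_T :: "nat list set \<Rightarrow> nat list \<Rightarrow> nat list" where
  "s_T T x = stack_run T x []"

definition west_s :: "nat list \<Rightarrow> nat list" where
  "west_s x = s_T {[2,1]} x"

definition Sort2 :: "nat \<Rightarrow> nat list \<Rightarrow> nat list \<Rightarrow> nat list set" where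
  "Sort2 n \<sigma> \<tau> = {x \<in> perms n. west_s (s_T {\<sigma>, \<tau>} x) = [1..<n+1]}"

definition inc :: "nat list \<Rightarrow> nat list" where
  "inc x = map Suc x @ [1]"

end

(*
  Write s' for the {123,321}-machine. Since inc x = map Suc x @ [1], and shifting all entries commutes
  with s' and with pattern containment, it suffices to compare s'(w) with s'(w @ [m]) for a word w
  whose entries all exceed m. By Knuth, West's map s sorts a permutation iff it avoids 231.

  Reading w leaves an output P and a stack S; the final entry m then pops S down to its longest
  decreasing suffix S2, so s'(w) = P S1 S2 and s'(w @ [m]) = P S1 m S2. A 231 through m uses m as
  its "1", so it needs an ascent in P S1. If s'(w) avoids 231, the minimum of w is never popped
  while input remains (that pop would create a 231), so it lies in S. Everything before it in s'(w)
  is then decreasing by 231-avoidance, everything below it in S is decreasing by 123-avoidance, and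
  by maximality of S2 the word P S1 ends at or before the minimum; hence P S1 is decreasing.
*)

theory Submission
  imports Defs
begin

section \<open>Subsequences\<close>

lemma subseq_Cons_iff:
  "subseq xs (y # ys) \<longleftrightarrow> subseq xs ys \<or> (\<exists>xs'. xs = y # xs' \<and> subseq xs' ys)"
  by (cases xs) (auto dest: subseq_Cons')

lemma subseq_insert_iff:
  "subseq xs (A @ c # B) \<longleftrightarrow> subseq xs (A @ B) \<or>
     (\<exists>xs1 xs2. xs = xs1 @ c # xs2 \<and> subseq xs1 A \<and> subseq xs2 B)"
  (is "?lhs \<longleftrightarrow> ?rhs")
proof
  show "?lhs \<Longrightarrow> ?rhs"
    by (auto simp: subseq_append_iff subseq_Cons_iff)
  have "subseq (A @ B) (A @ c # B)"
    by (simp add: subseq_append' list_emb_Cons)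
  then show "?rhs \<Longrightarrow> ?lhs"
    by (auto intro: list_emb_append_mono subseq_order.trans)
qed

lemma subseq_map_right_iff: "subseq ys (map f xs) \<longleftrightarrow> (\<exists>zs. ys = map f zs \<and> subseq zs xs)"
proof
  show "subseq ys (map f xs) \<Longrightarrow> \<exists>zs. ys = map f zs \<and> subseq zs xs"
  proof (induction xs arbitrary: ys)
    case (Cons x xs)
    then consider "subseq ys (map f xs)" | ys' where "ys = f x # ys'" "subseq ys' (map f xs)"
      by (auto simp: subseq_Cons_iff)
    then show ?case
    proof cases
      case 1
      with Cons.IH show ?thesis
        by (meson list_emb_Cons)
    next
      case 2
      with Cons.IH obtain zs where "ys' = map f zs" "subseq zs xs"
        by blast
      with 2 show ?thesis
        by (intro exI[of _ "x # zs"]) simp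
    qed
  qed (auto dest: list_emb_Nil2)
qed (auto intro: subseq_map)

lemma subseq_set_subset: "subseq xs ys \<Longrightarrow> set xs \<subseteq> set ys"
  by (auto elim: list_emb_set)

lemma sorted_wrt_iff_subseq_pairs:
  "sorted_wrt R xs \<longleftrightarrow> (\<forall>u v. subseq [u, v] xs \<longrightarrow> R u v)"
  by (induction xs) (auto simp: subseq_Cons_iff subseq_singleton_left)

lemma sorted_wrt_subseq: "subseq ys xs \<Longrightarrow> sorted_wrt R xs \<Longrightarrow> sorted_wrt R ys"
  unfolding sorted_wrt_iff_subseq_pairs using subseq_order.trans by blast

section \<open>Short patterns\<close>

lemma contains_subseq: "subseq u w \<Longrightarrow> contains u p \<Longrightarrow> contains w p"
  unfolding contains_def using subseq_order.trans by blast

lemma avoids_all_subseq: "subseq u w \<Longrightarrow> avoids_all T w \<Longrightarrow> avoids_all T u"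
  unfolding avoids_all_def using contains_subseq by blast

lemma avoids_all_shorter: "\<forall>p\<in>T. length w < length p \<Longrightarrow> avoids_all T w"
  unfolding avoids_all_def contains_def order_iso_def using list_emb_length by fastforce

lemma contains_map_strict_mono:
  assumes "strict_mono f"
  shows "contains (map f w) p \<longleftrightarrow> contains w p"
proof -
  have "order_iso (map f ys) p \<longleftrightarrow> order_iso ys p" for ys
    using assms by (auto simp: order_iso_def strict_mono_less)
  then show ?thesis
    unfolding contains_def subseq_map_right_iff by blast
qed

lemma avoids_all_map_strict_mono: "strict_mono f \<Longrightarrow> avoids_all T (map f w) \<longleftrightarrow> avoids_all T w"
  by (simp add: avoids_all_def contains_map_strict_mono)

lemma contains_length2:
  "contains w [p, q] \<longleftrightarrow> (\<exists>a b. subseq [a, b] w \<and> order_iso [a, b] [p, q])"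
proof -
  have "order_iso ys [p, q] \<Longrightarrow> \<exists>a b. ys = [a, b]" for ys
    by (auto simp: order_iso_def length_Suc_conv)
  then show ?thesis
    unfolding contains_def by blast
qed

lemma contains_length3:
  "contains w [p, q, r] \<longleftrightarrow> (\<exists>a b c. subseq [a, b, c] w \<and> order_iso [a, b, c] [p, q, r])"
proof -
  have "order_iso ys [p, q, r] \<Longrightarrow> \<exists>a b c. ys = [a, b, c]" for ys
    by (auto simp: order_iso_def length_Suc_conv)
  then show ?thesis
    unfolding contains_def by blast
qed

lemma contains_21_iff: "contains w [2, 1] \<longleftrightarrow> (\<exists>a b. subseq [a, b] w \<and> b < a)"
  unfolding contains_length2
  by (auto simp: order_iso_def numeral_2_eq_2 All_less_Suc2) (use less_asym in blast)

lemma contains_123_iff: "contains w [1, 2, 3] \<longleftrightarrow> (\<exists>a b c. subseq [a, b, c] w \<and> a < b \<and> b < c)"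
  unfolding contains_length3
  by (auto simp: order_iso_def numeral_3_eq_3 All_less_Suc2) (use less_trans less_asym in blast)

lemma contains_321_iff: "contains w [3, 2, 1] \<longleftrightarrow> (\<exists>a b c. subseq [a, b, c] w \<and> b < a \<and> c < b)"
  unfolding contains_length3
  by (auto simp: order_iso_def numeral_3_eq_3 All_less_Suc2) (use less_trans less_asym in blast)

lemma contains_231_iff: "contains w [2, 3, 1] \<longleftrightarrow> (\<exists>a b c. subseq [a, b, c] w \<and> c < a \<and> a < b)"
  unfolding contains_length3
  by (auto simp: order_iso_def numeral_3_eq_3 All_less_Suc2) (use less_trans less_asym in blast)

lemma avoids_21_iff: "avoids_all {[2, 1]} w \<longleftrightarrow> sorted_wrt (\<le>) w"
proof -
  have "avoids_all {[2, 1]} w \<longleftrightarrow> \<not> contains w [2, 1]"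
    by (simp add: avoids_all_def)
  also have "\<dots> \<longleftrightarrow> sorted_wrt (\<le>) w"
    unfolding contains_21_iff sorted_wrt_iff_subseq_pairs by (auto simp: not_less)
  finally show ?thesis .
qed

lemma decreasing_not_contains_231:
  assumes "sorted_wrt (>) w"
  shows "\<not> contains w [2, 3, 1]"
proof
  assume "contains w [2, 3, 1]"
  then obtain a b c where "subseq [a, b, c] w" "a < b"
    unfolding contains_231_iff by blast
  moreover from this(1) have "sorted_wrt (>) [a, b, c]"
    using assms by (rule sorted_wrt_subseq)
  ultimately show False
    by simp
qed

lemma contains_231_insert_iff:
  "contains (A @ c # B) [2, 3, 1] \<longleftrightarrow> contains (A @ B) [2, 3, 1] \<or>
     (\<exists>q r. subseq [q, r] B \<and> r < c \<and> c < q) \<or>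
     (\<exists>p\<in>set A. \<exists>r\<in>set B. r < p \<and> p < c) \<or>
     (\<exists>p q. subseq [p, q] A \<and> c < p \<and> p < q)"
  (is "_ \<longleftrightarrow> _ \<or> ?c_as_2 \<or> ?c_as_3 \<or> ?c_as_1")
proof
  assume "contains (A @ c # B) [2, 3, 1]"
  then obtain p q r where pqr: "subseq [p, q, r] (A @ c # B)" "r < p" "p < q"
    unfolding contains_231_iff by blast
  consider (avoiding_c) "subseq [p, q, r] (A @ B)"
    | (through_c) xs1 xs2 where "[p, q, r] = xs1 @ c # xs2" "subseq xs1 A" "subseq xs2 B"
    using subseq_insert_iff[THEN iffD1, OF pqr(1)] by blast
  then show "contains (A @ B) [2, 3, 1] \<or> ?c_as_2 \<or> ?c_as_3 \<or> ?c_as_1"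
  proof cases
    case avoiding_c
    with pqr show ?thesis
      unfolding contains_231_iff by blast
  next
    case through_c
    then consider (c_as_2) "xs1 = []" "c = p" "xs2 = [q, r]"
      | (c_as_3) "xs1 = [p]" "c = q" "xs2 = [r]"
      | (c_as_1) "xs1 = [p, q]" "c = r" "xs2 = []"
      by (cases xs1; cases "tl xs1"; auto simp: Cons_eq_append_conv)
    then show ?thesis
    proof cases
      case c_as_2
      with through_c pqr show ?thesis by blast
    next
      case c_as_3
      with through_c have "p \<in> set A" "r \<in> set B"
        by (simp_all add: subseq_singleton_left)
      with c_as_3 pqr show ?thesis by blast
    next
      case c_as_1
      with through_c pqr show ?thesis by blast
    qed
  qed
next
  have through_c: "subseq (xs1 @ c # xs2) (A @ c # B)" if "subseq xs1 A" "subseq xs2 B" for xs1 xs2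
    using that by (intro list_emb_append_mono subseq_Cons2)
  assume "contains (A @ B) [2, 3, 1] \<or> ?c_as_2 \<or> ?c_as_3 \<or> ?c_as_1"
  then show "contains (A @ c # B) [2, 3, 1]"
  proof (elim disjE exE bexE conjE)
    assume "contains (A @ B) [2, 3, 1]"
    moreover have "subseq (A @ B) (A @ c # B)"
      by (simp add: subseq_append' list_emb_Cons)
    ultimately show ?thesis
      by (rule contains_subseq[rotated])
  next
    fix q r assume "subseq [q, r] B" "r < c" "c < q"
    with through_c[of "[]" "[q, r]"] show ?thesis
      unfolding contains_231_iff by auto
  next
    fix p r assume "p \<in> set A" "r \<in> set B" "r < p" "p < c"
    with through_c[of "[p]" "[r]"] show ?thesis
      unfolding contains_231_iff by (auto simp: subseq_singleton_left)
  next
    fix p q assume "subseq [p, q] A" "c < p" "p < q"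
    with through_c[of "[p, q]" "[]"] show ?thesis
      unfolding contains_231_iff by auto
  qed
qed

lemma contains_231_insert_min:
  assumes "sorted_wrt (>) A" "\<forall>z\<in>set B. m < z"
  shows "contains (A @ m # B) [2, 3, 1] \<longleftrightarrow> contains (A @ B) [2, 3, 1]"
proof -
  have "\<not> (\<exists>q r. subseq [q, r] B \<and> r < m \<and> m < q)"
    using assms(2) subseq_set_subset[of "[_, _]" B] by fastforce
  moreover have "\<not> (\<exists>p\<in>set A. \<exists>r\<in>set B. r < p \<and> p < m)"
    using assms(2) by fastforce
  moreover have "\<not> (\<exists>p q. subseq [p, q] A \<and> m < p \<and> p < q)"
    using assms(1) unfolding sorted_wrt_iff_subseq_pairs using less_asym by blast
  ultimately show ?thesis
    unfolding contains_231_insert_iff by blast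
qed

lemma contains_231_insert_below:
  assumes "sorted_wrt (>) A" "\<forall>z\<in>set A. b < z" "b < a"
  shows "contains (A @ b # a # B) [2, 3, 1] \<longleftrightarrow> contains (A @ a # B) [2, 3, 1] \<or> (\<exists>z\<in>set B. z < b)"
proof -
  have no_b_as_3: "(\<exists>p\<in>set A. \<exists>r\<in>set (a # B). r < p \<and> p < b) = False"
    using assms(2) by auto
  have no_b_as_1: "(\<exists>p q. subseq [p, q] A \<and> b < p \<and> p < q) = False"
    using assms(1) unfolding sorted_wrt_iff_subseq_pairs using less_asym by blast
  have b_as_2: "(\<exists>q r. subseq [q, r] (a # B) \<and> r < b \<and> b < q) \<longleftrightarrow> (\<exists>z\<in>set B. z < b)"
  proof
    assume "\<exists>q r. subseq [q, r] (a # B) \<and> r < b \<and> b < q"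
    then obtain q r where qr: "subseq [q, r] (a # B)" "r < b"
      by blast
    from subseq_Cons'[OF qr(1)] have "r \<in> set (a # B)"
      unfolding subseq_singleton_left .
    with assms(3) qr(2) show "\<exists>z\<in>set B. z < b"
      by auto
  next
    assume "\<exists>z\<in>set B. z < b"
    then obtain z where z: "z \<in> set B" "z < b"
      by blast
    then have "subseq [a, z] (a # B)"
      by (simp add: subseq_singleton_left)
    with z(2) assms(3) show "\<exists>q r. subseq [q, r] (a # B) \<and> r < b \<and> b < q"
      by blast
  qed
  show ?thesis
    unfolding contains_231_insert_iff[of A b "a # B"] no_b_as_1 no_b_as_3 b_as_2 by blast
qed

lemma decreasing_before_min:
  assumes "\<not> contains (A @ m # B) [2, 3, 1]" "distinct A" "\<forall>z\<in>set A. m < z"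
  shows "sorted_wrt (>) A"
  unfolding sorted_wrt_iff_subseq_pairs
proof (intro allI impI)
  fix u v
  assume uv: "subseq [u, v] A"
  then have "u \<noteq> v"
    using subseqs_distinctD[of "[u, v]" A] assms(2) by simp
  moreover have "m < u"
    using subseq_set_subset[OF uv] assms(3) by simp
  moreover have "subseq [u, v, m] (A @ m # B)"
    using list_emb_append_mono[OF uv, of "[m]" "m # B"] by simp
  ultimately show "v < u"
    using assms(1) unfolding contains_231_iff by (meson linorder_neqE_nat)
qed

section \<open>The pattern-avoiding stack machine\<close>

lemma stack_run_push:
  "avoids_all T (a # st) \<or> st = [] \<Longrightarrow> stack_run T (a # inp) st = stack_run T inp (a # st)"
  by simp

lemma stack_run_pop:
  "\<not> avoids_all T (a # b # st) \<Longrightarrow> stack_run T (a # inp) (b # st) = b # stack_run T (a # inp) st"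
  by simp

declare stack_run.simps(2) [simp del]

lemma stack_run_induct [case_names input_empty push pop]:
  assumes "\<And>st. P [] st"
    and "\<And>a inp st. avoids_all T (a # st) \<or> st = [] \<Longrightarrow> P inp (a # st) \<Longrightarrow> P (a # inp) st"
    and "\<And>a inp b st. \<not> avoids_all T (a # b # st) \<Longrightarrow> P (a # inp) st \<Longrightarrow> P (a # inp) (b # st)"
  shows "P inp st"
proof (induction "2 * length inp + length st" arbitrary: inp st rule: less_induct)
  case less
  show ?case
  proof (cases inp)
    case Nil
    with assms(1) show ?thesis by simp
  next
    case (Cons a inp')
    show ?thesis
    proof (cases "avoids_all T (a # st) \<or> st = []")
      case True
      with Cons less assms(2) show ?thesis by simp
    next
      case False
      then obtain b st' where "st = b # st'" "\<not> avoids_all T (a # b # st')"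
        by (cases st) auto
      with Cons less assms(3) show ?thesis by simp
    qed
  qed
qed

lemma set_stack_run: "set (stack_run T inp st) = set inp \<union> set st"
  by (induction inp st rule: stack_run_induct[where T = T])
    (auto simp: stack_run_push stack_run_pop)

lemma distinct_stack_run: "distinct (inp @ st) \<Longrightarrow> distinct (stack_run T inp st)"
  by (induction inp st rule: stack_run_induct[where T = T])
    (auto simp: stack_run_push stack_run_pop set_stack_run)

lemma subseq_stack_run: "subseq st (stack_run T inp st)"
  by (induction inp st rule: stack_run_induct[where T = T])
    (auto simp: stack_run_push stack_run_pop dest: subseq_Cons')

lemma stack_run_map_strict_mono:
  assumes "strict_mono f"
  shows "stack_run T (map f inp) (map f st) = map f (stack_run T inp st)"
proof (induction inp st rule: stack_run_induct[where T = T])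
  case (push a inp st)
  then have "avoids_all T (f a # map f st) \<or> map f st = []"
    using avoids_all_map_strict_mono[OF assms, of T "a # st"] by auto
  with push.IH show ?case
    by (simp add: stack_run_push push.hyps)
next
  case (pop a inp b st)
  then have "\<not> avoids_all T (f a # f b # map f st)"
    using avoids_all_map_strict_mono[OF assms, of T "a # b # st"] by simp
  with pop.IH show ?case
    by (simp add: stack_run_pop pop.hyps)
qed simp

lemma s_T_perms: "x \<in> perms n \<Longrightarrow> s_T T x \<in> perms n"
  by (simp add: perms_def s_T_def set_stack_run distinct_stack_run)

(* Splits a run into the output produced while input remains and the stack left when it runs out. *)
function stack_pass :: "nat list set \<Rightarrow> nat list \<Rightarrow> nat list \<Rightarrow> nat list \<times> nat list" where
  "stack_pass T [] st = ([], st)"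
| "stack_pass T (a # inp) st =
     (if avoids_all T (a # st) \<or> st = [] then stack_pass T inp (a # st)
      else apfst (Cons (hd st)) (stack_pass T (a # inp) (tl st)))"
  by pat_completeness auto
termination
  by (relation "measure (\<lambda>(T, inp, st). 2 * length inp + length st)") auto

lemma stack_pass_push:
  "avoids_all T (a # st) \<or> st = [] \<Longrightarrow> stack_pass T (a # inp) st = stack_pass T inp (a # st)"
  by simp

lemma stack_pass_pop:
  "\<not> avoids_all T (a # b # st) \<Longrightarrow>
    stack_pass T (a # inp) (b # st) = apfst (Cons b) (stack_pass T (a # inp) st)"
  by simp

declare stack_pass.simps(2) [simp del]

lemma stack_run_append:
  "stack_run T (inp @ more) st =
     fst (stack_pass T inp st) @ stack_run T more (snd (stack_pass T inp st))"
  by (induction inp st rule: stack_run_induct[where T = T])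
    (auto simp: stack_run_push stack_run_pop stack_pass_push stack_pass_pop apfst_def map_prod_def
      split: prod.split)

lemma stack_run_eq_stack_pass:
  "stack_run T inp st = fst (stack_pass T inp st) @ snd (stack_pass T inp st)"
  using stack_run_append[of T inp "[]" st] by simp

lemma avoids_all_stack_pass:
  assumes "\<forall>p\<in>T. 1 < length p" "avoids_all T st"
  shows "avoids_all T (snd (stack_pass T inp st))"
  using assms(2)
proof (induction inp st rule: stack_run_induct[where T = T])
  case (push a inp st)
  then have "avoids_all T (a # st)"
    using assms(1) avoids_all_shorter[of T "[a]"] by auto
  with push.IH show ?case
    by (simp add: stack_pass_push push.hyps)
next
  case (pop a inp b st)
  have "avoids_all T st"
    using pop.prems avoids_all_subseq[of st "b # st"] by (simp add: list_emb_Cons)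
  with pop.IH show ?case
    by (simp add: stack_pass_pop pop.hyps)
qed simp

section \<open>West's stack-sorting map\<close>

(* Knuth's theorem, for a run started on a nonempty stack: read bottom to top, the stack acts as a
   prefix of the input. *)
lemma sorted_stack_run_21_iff:
  assumes "distinct (inp @ st)" "sorted_wrt (<) st"
  shows "sorted_wrt (<) (stack_run {[2, 1]} inp st) \<longleftrightarrow> \<not> contains (rev st @ inp) [2, 3, 1]"
  using assms
proof (induction inp st rule: stack_run_induct[where T = "{[2, 1]}"])
  case (input_empty st)
  then show ?case
    using decreasing_not_contains_231[of "rev st"] by (simp add: sorted_wrt_rev)
next
  case (push a inp st)
  from push.hyps have "\<forall>z\<in>set st. a \<le> z"
    unfolding avoids_21_iff by auto
  with push.prems have "sorted_wrt (<) (a # st)"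
    by (auto simp: order.order_iff_strict)
  with push.IH push.prems(1) show ?case
    unfolding stack_run_push[OF push.hyps] by simp
next
  case (pop a inp b st)
  have b_min: "\<forall>z\<in>set st. b < z"
    using pop.prems(2) by simp
  have "b < a"
  proof (rule ccontr)
    assume "\<not> b < a"
    with b_min have "\<forall>z\<in>set (b # st). a \<le> z"
      by auto
    moreover have "sorted_wrt (\<le>) (b # st)"
      using pop.prems(2) by (rule strict_sorted_imp_sorted)
    ultimately have "avoids_all {[2, 1]} (a # b # st)"
      unfolding avoids_21_iff by simp
    with pop.hyps show False ..
  qed
  have IH: "sorted_wrt (<) (stack_run {[2, 1]} (a # inp) st) \<longleftrightarrow> \<not> contains (rev st @ a # inp) [2, 3, 1]"
    using pop.IH pop.prems by simp
  have "sorted_wrt (<) (stack_run {[2, 1]} (a # inp) (b # st)) \<longleftrightarrow>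
      (\<forall>z\<in>set inp. b < z) \<and> \<not> contains (rev st @ a # inp) [2, 3, 1]"
    using IH b_min \<open>b < a\<close> unfolding stack_run_pop[OF pop.hyps] by (auto simp: set_stack_run)
  also have "\<dots> \<longleftrightarrow> \<not> (\<exists>z\<in>set inp. z < b) \<and> \<not> contains (rev st @ a # inp) [2, 3, 1]"
    using pop.prems(1) by (auto simp: not_less order.order_iff_strict)
  also have "\<dots> \<longleftrightarrow> \<not> contains (rev st @ b # a # inp) [2, 3, 1]"
    using contains_231_insert_below[of "rev st" b a inp] pop.prems(2) b_min \<open>b < a\<close>
    by (auto simp: sorted_wrt_rev)
  finally show ?case
    by simp
qed

lemma perms_sorted_iff_upt:
  assumes "v \<in> perms n"
  shows "sorted_wrt (<) v \<longleftrightarrow> v = [1..<n+1]"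
proof
  have "set [1..<n+1] = {1..n}"
    by auto
  with assms have set_v: "set v = set [1..<n+1]"
    by (simp add: perms_def)
  show "sorted_wrt (<) v \<Longrightarrow> v = [1..<n+1]"
    using strict_sorted_equal[OF sorted_wrt_upt _ set_v] .
qed (simp only: sorted_wrt_upt)

lemma west_s_eq_upt_iff:
  assumes "w \<in> perms n"
  shows "west_s w = [1..<n+1] \<longleftrightarrow> \<not> contains w [2, 3, 1]"
proof -
  have "west_s w \<in> perms n"
    using s_T_perms[OF assms] by (simp add: west_s_def)
  then have "west_s w = [1..<n+1] \<longleftrightarrow> sorted_wrt (<) (west_s w)"
    by (simp only: perms_sorted_iff_upt)
  also have "\<dots> \<longleftrightarrow> \<not> contains w [2, 3, 1]"
    using sorted_stack_run_21_iff[of w "[]"] assms unfolding west_s_def s_T_def perms_def by simp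
  finally show ?thesis .
qed

lemma Sort2_iff_not_contains_231:
  assumes "x \<in> perms n"
  shows "x \<in> Sort2 n \<sigma> \<tau> \<longleftrightarrow> \<not> contains (s_T {\<sigma>, \<tau>} x) [2, 3, 1]"
  unfolding Sort2_def mem_Collect_eq west_s_eq_upt_iff[OF s_T_perms[OF assms]] using assms by simp

section \<open>The stack avoiding 123 and 321\<close>

abbreviation monotone3 :: "nat list set" where
  "monotone3 \<equiv> {[1, 2, 3], [3, 2, 1]}"

lemma avoids_monotone3_iff:
  "avoids_all monotone3 w \<longleftrightarrow> \<not> contains w [1, 2, 3] \<and> \<not> contains w [3, 2, 1]"
  by (simp add: avoids_all_def)

lemma avoids_monotone3_Cons_min:
  assumes "avoids_all monotone3 st" "distinct st" "\<forall>z\<in>set st. m < z"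
  shows "avoids_all monotone3 (m # st) \<longleftrightarrow> sorted_wrt (>) st"
proof
  assume "avoids_all monotone3 (m # st)"
  then have no_123: "\<not> (\<exists>a b c. subseq [a, b, c] (m # st) \<and> a < b \<and> b < c)"
    unfolding avoids_monotone3_iff contains_123_iff by blast
  show "sorted_wrt (>) st"
    unfolding sorted_wrt_iff_subseq_pairs
  proof (intro allI impI)
    fix u v
    assume uv: "subseq [u, v] st"
    then have "u \<noteq> v"
      using subseqs_distinctD[of "[u, v]" st] assms(2) by simp
    moreover have "m < u"
      using subseq_set_subset[OF uv] assms(3) by simp
    moreover have "subseq [m, u, v] (m # st)"
      using uv by simp
    ultimately show "v < u"
      using no_123 by (meson linorder_neqE_nat)
  qed
next
  assume dec: "sorted_wrt (>) st"
  show "avoids_all monotone3 (m # st)"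
    unfolding avoids_monotone3_iff contains_123_iff contains_321_iff
  proof (intro conjI notI; elim exE conjE)
    fix a b c
    assume abc: "subseq [a, b, c] (m # st)" "a < b" "b < c"
    then have "subseq [b, c] st"
      by (auto simp: subseq_Cons_iff dest: subseq_Cons')
    with dec abc(3) show False
      unfolding sorted_wrt_iff_subseq_pairs using less_asym by blast
  next
    fix a b c
    assume abc: "subseq [a, b, c] (m # st)" "b < a" "c < b"
    have "\<not> subseq [a, b, c] st"
      using assms(1) abc(2,3) unfolding avoids_monotone3_iff contains_321_iff by blast
    with abc(1) have "a = m" "subseq [b, c] st"
      by (auto simp: subseq_Cons_iff)
    with abc(2) assms(3) show False
      using subseq_set_subset by fastforce
  qed
qed

lemma decreasing_length_le_2:
  assumes "sorted_wrt (>) st" "\<not> contains st [3, 2, 1]"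
  shows "length st \<le> 2"
proof (rule ccontr)
  assume "\<not> length st \<le> 2"
  then obtain x y z rest where "st = x # y # z # rest"
    by (metis Suc_le_length_iff not_less_eq_eq numeral_2_eq_2)
  with assms show False
    unfolding contains_321_iff by auto
qed

lemma stack_run_monotone3_new_min:
  assumes "avoids_all monotone3 st" "distinct st" "\<forall>z\<in>set st. m < z"
  shows "\<exists>S1 S2. st = S1 @ S2 \<and> stack_run monotone3 [m] st = S1 @ m # S2 \<and>
    sorted_wrt (>) S2 \<and> (\<forall>D. suffix D st \<and> sorted_wrt (>) D \<longrightarrow> suffix D S2)"
  using assms
proof (induction st)
  case Nil
  have "stack_run monotone3 [m] [] = [m]"
    by (simp add: stack_run_push)
  then show ?case
    by (intro exI[of _ "[]"]) simp
next
  case (Cons b st)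
  show ?case
  proof (cases "sorted_wrt (>) (b # st)")
    case True
    with Cons.prems have "avoids_all monotone3 (m # b # st)"
      using avoids_monotone3_Cons_min by blast
    then have "stack_run monotone3 [m] (b # st) = m # b # st"
      by (simp add: stack_run_push)
    with True show ?thesis
      by (intro exI[of _ "[]"] exI[of _ "b # st"]) auto
  next
    case False
    with Cons.prems have "\<not> avoids_all monotone3 (m # b # st)"
      using avoids_monotone3_Cons_min by blast
    then have run: "stack_run monotone3 [m] (b # st) = b # stack_run monotone3 [m] st"
      by (rule stack_run_pop)
    have "avoids_all monotone3 st"
      using Cons.prems(1) avoids_all_subseq[of st "b # st"] by (simp add: list_emb_Cons)
    with Cons.IH Cons.prems obtain S1 S2 where S: "st = S1 @ S2"
      "stack_run monotone3 [m] st = S1 @ m # S2" "sorted_wrt (>) S2"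
      "\<forall>D. suffix D st \<and> sorted_wrt (>) D \<longrightarrow> suffix D S2"
      by auto
    have "\<forall>D. suffix D (b # st) \<and> sorted_wrt (>) D \<longrightarrow> suffix D S2"
      using S(4) False by (auto simp: suffix_Cons)
    with S run show ?thesis
      by (intro exI[of _ "b # S1"] exI[of _ S2]) auto
  qed
qed

lemma monotone3_pop_over_min_shape:
  assumes "avoids_all monotone3 (m # st)" "distinct st" "\<forall>z\<in>set (a # st). m < z"
    and "\<not> avoids_all monotone3 (a # m # st)"
  shows "\<exists>q r. st = [q, r] \<and> r < q \<and> q < a"
proof -
  have av: "avoids_all monotone3 st"
    using assms(1) avoids_all_subseq[of st "m # st"] by (simp add: list_emb_Cons)
  with assms(1-3) have dec: "sorted_wrt (>) st"
    using avoids_monotone3_Cons_min by simp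
  from assms(4) obtain p q r where pqr: "subseq [p, q, r] (a # m # st)"
    "(p < q \<and> q < r) \<or> (q < p \<and> r < q)"
    unfolding avoids_monotone3_iff contains_123_iff contains_321_iff by blast
  moreover have "\<not> subseq [p, q, r] (m # st)"
    using assms(1) pqr(2) unfolding avoids_monotone3_iff contains_123_iff contains_321_iff by blast
  ultimately have "p = a" and qr': "subseq [q, r] (m # st)"
    by (auto simp: subseq_Cons_iff)
  have "q \<noteq> m"
  proof
    assume "q = m"
    with qr' have "r \<in> set st"
      using subseq_Cons2' subseq_singleton_left by metis
    with pqr(2) \<open>p = a\<close> \<open>q = m\<close> assms(3) show False
      by auto
  qed
  with qr' have qr: "subseq [q, r] st"
    by simp
  with dec have "r < q"
    unfolding sorted_wrt_iff_subseq_pairs by blast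
  with pqr(2) \<open>p = a\<close> have "q < a"
    by auto
  have "length st \<le> 2"
    using decreasing_length_le_2[OF dec] av unfolding avoids_monotone3_iff by blast
  with qr have "st = [q, r]"
    using subseq_same_length list_emb_length by fastforce
  with \<open>r < q\<close> \<open>q < a\<close> show ?thesis
    by blast
qed

lemma stack_run_monotone3_pop_min_contains_231:
  assumes "avoids_all monotone3 (m # st)" "distinct st" "\<forall>z\<in>set (a # st). m < z"
    and "\<not> avoids_all monotone3 (a # m # st)"
  shows "contains (stack_run monotone3 (a # inp) (m # st)) [2, 3, 1]"
proof -
  obtain q r where st: "st = [q, r]" "r < q" "q < a"
    using monotone3_pop_over_min_shape[OF assms] by blast
  \<comment> \<open>m and q are popped, then a is pushed onto r, so q, a, r appear in this order in the output.\<close>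
  have "\<not> avoids_all monotone3 [a, q, r]"
    using st unfolding avoids_monotone3_iff contains_321_iff by blast
  moreover have "avoids_all monotone3 [a, r]"
    by (rule avoids_all_shorter) simp
  ultimately have "stack_run monotone3 (a # inp) (m # st) = m # q # stack_run monotone3 inp [a, r]"
    using assms(4) st(1) by (simp add: stack_run_pop stack_run_push)
  moreover have "subseq [a, r] (stack_run monotone3 inp [a, r])"
    by (rule subseq_stack_run)
  moreover have "q \<noteq> m"
    using assms(3) st(1) by auto
  ultimately have "subseq [q, a, r] (stack_run monotone3 (a # inp) (m # st))"
    by (simp add: list_emb_Cons)
  with st(2,3) show ?thesis
    unfolding contains_231_iff by blast
qed

lemma stack_pass_monotone3_popped_min_contains_231:
  assumes "distinct (inp @ st)" "avoids_all monotone3 st" "\<forall>z\<in>set (inp @ st). m \<le> z"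
    and "m \<in> set (fst (stack_pass monotone3 inp st))"
  shows "contains (stack_run monotone3 inp st) [2, 3, 1]"
  using assms
proof (induction inp st rule: stack_run_induct[where T = monotone3])
  case (push a inp st)
  have "avoids_all monotone3 (a # st)"
    using push.hyps avoids_all_shorter[of monotone3 "[a]"] by auto
  with push.IH push.prems show ?case
    unfolding stack_run_push[OF push.hyps] stack_pass_push[OF push.hyps] by simp
next
  case (pop a inp b st)
  have "m = b \<or> m \<in> set (fst (stack_pass monotone3 (a # inp) st))"
    using pop.prems(4) unfolding stack_pass_pop[OF pop.hyps] by (simp add: apfst_def map_prod_def
      split: prod.splits)
  then show ?case
  proof
    assume "m = b"
    with pop.prems have "\<forall>z\<in>set (a # st). b < z"
      by (auto simp: order.order_iff_strict)
    with \<open>m = b\<close> pop.hyps pop.prems show ?case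
      using stack_run_monotone3_pop_min_contains_231[of b st a inp] by simp
  next
    assume "m \<in> set (fst (stack_pass monotone3 (a # inp) st))"
    moreover have "avoids_all monotone3 st"
      using pop.prems(2) avoids_all_subseq[of st "b # st"] by (simp add: list_emb_Cons)
    ultimately have "contains (stack_run monotone3 (a # inp) st) [2, 3, 1]"
      using pop.IH pop.prems by simp
    moreover have "subseq (stack_run monotone3 (a # inp) st) (stack_run monotone3 (a # inp) (b # st))"
      unfolding stack_run_pop[OF pop.hyps] by (simp add: list_emb_Cons)
    ultimately show ?case
      by (rule contains_subseq[rotated])
  qed
qed simp

lemma decreasing_around_min:
  assumes "\<not> contains (P @ U @ m # D) [2, 3, 1]" "avoids_all monotone3 (U @ m # D)"
    and "distinct (P @ U @ m # D)" "\<forall>z\<in>set (P @ U @ m # D). m \<le> z"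
  shows "sorted_wrt (>) (P @ U @ [m])" "sorted_wrt (>) D"
proof -
  have gt: "\<forall>z\<in>set (P @ U @ D). m < z"
    using assms(3,4) by (auto simp: order.order_iff_strict)
  have "avoids_all monotone3 (m # D)"
    using assms(2) by (rule avoids_all_subseq[rotated]) (intro subseq_drop_many subseq_order.refl)
  with gt assms(3) show "sorted_wrt (>) D"
    using avoids_monotone3_Cons_min[of D m] avoids_all_subseq[of D "m # D"] by (simp add: list_emb_Cons)
  have "distinct (P @ U)" "\<forall>z\<in>set (P @ U). m < z"
    using assms(3) gt by auto
  then have "sorted_wrt (>) (P @ U)"
    using decreasing_before_min[of "P @ U" m D] assms(1) by simp
  with gt show "sorted_wrt (>) (P @ U @ [m])"
    by (simp add: sorted_wrt_append)
qed

lemma stack_pass_monotone3_prefix_decreasing: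
  assumes "distinct w" "stack_pass monotone3 w [] = (P, S1 @ S2)"
    and "\<forall>D. suffix D (S1 @ S2) \<and> sorted_wrt (>) D \<longrightarrow> suffix D S2"
    and "\<not> contains (P @ S1 @ S2) [2, 3, 1]"
  shows "sorted_wrt (>) (P @ S1)"
proof (cases "w = []")
  case True
  with assms(2) show ?thesis
    by simp
next
  case False
  define m where "m = Min (set w)"
  have m: "m \<in> set w" "\<forall>z\<in>set w. m \<le> z"
    using False by (simp_all add: m_def)
  have out: "stack_run monotone3 w [] = P @ S1 @ S2"
    using stack_run_eq_stack_pass[of monotone3 w "[]"] assms(2) by simp
  then have set_out: "set (P @ S1 @ S2) = set w" and dist_out: "distinct (P @ S1 @ S2)"
    using set_stack_run[of monotone3 w "[]"] distinct_stack_run[of w "[]" monotone3] assms(1)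
    by simp_all
  have "m \<notin> set P"
  proof
    assume "m \<in> set P"
    then have "contains (stack_run monotone3 w []) [2, 3, 1]"
      using stack_pass_monotone3_popped_min_contains_231[of w "[]" m] assms(1,2) m
        avoids_all_shorter[of _ "[]"]
      by simp
    with out assms(4) show False
      by simp
  qed
  with m(1) set_out obtain U D where S: "S1 @ S2 = U @ m # D"
    by (metis Un_iff set_append split_list)
  have "avoids_all monotone3 (S1 @ S2)"
    using avoids_all_stack_pass[of monotone3 "[]" w] assms(2) avoids_all_shorter[of _ "[]"] by simp
  with assms(4) dist_out set_out m(2)
  have "sorted_wrt (>) (P @ U @ [m])" "sorted_wrt (>) D"
    using decreasing_around_min[of P U m D] unfolding S by simp_all
  have "suffix D (S1 @ S2)"
    unfolding S by (rule suffixI[where zs = "U @ [m]"]) simp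
  with assms(3) \<open>sorted_wrt (>) D\<close> have "suffix D S2"
    by blast
  then obtain E where "S2 = E @ D"
    by (rule suffixE)
  with S have "P @ U @ [m] = (P @ S1) @ E"
    by simp
  with \<open>sorted_wrt (>) (P @ U @ [m])\<close> show ?thesis
    by (simp add: sorted_wrt_append)
qed

lemma contains_231_s_T_monotone3_append_min:
  assumes "distinct w" "\<forall>z\<in>set w. m < z"
  shows "contains (s_T monotone3 (w @ [m])) [2, 3, 1] \<longleftrightarrow> contains (s_T monotone3 w) [2, 3, 1]"
proof -
  obtain P S where pass: "stack_pass monotone3 w [] = (P, S)"
    by fastforce
  have out: "s_T monotone3 w = P @ S"
    unfolding s_T_def stack_run_eq_stack_pass pass by simp
  then have "distinct S" and S_gt: "\<forall>z\<in>set S. m < z"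
    using assms distinct_stack_run[of w "[]" monotone3] set_stack_run[of monotone3 w "[]"]
    unfolding s_T_def by auto
  moreover have "avoids_all monotone3 S"
    using avoids_all_stack_pass[of monotone3 "[]" w] pass avoids_all_shorter[of _ "[]"] by simp
  ultimately obtain S1 S2 where S: "S = S1 @ S2" "stack_run monotone3 [m] S = S1 @ m # S2"
    "\<forall>D. suffix D S \<and> sorted_wrt (>) D \<longrightarrow> suffix D S2"
    using stack_run_monotone3_new_min[of S m] by blast
  have out_m: "s_T monotone3 (w @ [m]) = (P @ S1) @ m # S2"
    unfolding s_T_def stack_run_append pass using S(2) by simp
  show ?thesis
  proof (cases "contains (s_T monotone3 w) [2, 3, 1]")
    case True
    then show ?thesis
      unfolding out_m out S(1) contains_231_insert_iff by simp
  next
    case False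
    then have "sorted_wrt (>) (P @ S1)"
      using stack_pass_monotone3_prefix_decreasing[of w P S1 S2] assms(1) pass S out by simp
    with S_gt show ?thesis
      unfolding out_m out S(1) using contains_231_insert_min[of "P @ S1" S2 m] by simp
  qed
qed

lemma inc_perms: "x \<in> perms n \<Longrightarrow> inc x \<in> perms (n + 1)"
proof -
  assume "x \<in> perms n"
  then have "distinct x" "set x = {1..n}"
    by (simp_all add: perms_def)
  moreover have "Suc ` {1..n} \<union> {1} = {1..n + 1}"
    by (auto simp: image_iff)
  ultimately show ?thesis
    by (auto simp: perms_def inc_def distinct_map)
qed

theorem proposition4p7:
  fixes n :: nat and x :: "nat list"
  assumes "n \<ge> 5" and "x \<in> perms n"
  shows "x \<in> Sort2 n [1,2,3] [3,2,1] \<longleftrightarrow> inc x \<in> Sort2 (n+1) [1,2,3] [3,2,1]"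
proof -
  have shifted: "distinct (map Suc x)" "\<forall>z\<in>set (map Suc x). 1 < z"
    using assms(2) by (auto simp: perms_def distinct_map)
  have "strict_mono Suc"
    by (simp add: strict_mono_Suc_iff)
  have "x \<in> Sort2 n [1, 2, 3] [3, 2, 1] \<longleftrightarrow> \<not> contains (s_T monotone3 x) [2, 3, 1]"
    by (rule Sort2_iff_not_contains_231[OF assms(2)])
  also have "\<dots> \<longleftrightarrow> \<not> contains (s_T monotone3 (map Suc x)) [2, 3, 1]"
    unfolding s_T_def
    using stack_run_map_strict_mono[OF \<open>strict_mono Suc\<close>, of monotone3 x "[]"]
      contains_map_strict_mono[OF \<open>strict_mono Suc\<close>] by simp
  also have "\<dots> \<longleftrightarrow> \<not> contains (s_T monotone3 (inc x)) [2, 3, 1]"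
    unfolding inc_def using contains_231_s_T_monotone3_append_min[OF shifted] by simp
  also have "\<dots> \<longleftrightarrow> inc x \<in> Sort2 (n + 1) [1, 2, 3] [3, 2, 1]"
    by (rule Sort2_iff_not_contains_231[OF inc_perms[OF assms(2)], symmetric])
  finally show ?thesis .
qed

end
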